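(* For all graphs $G$ and $H$: if $G$ and $H$ are distinguishable by EB-1WL, then there exist $d\ge1$, $t\ge1$ and a $d$-dimensional EB-GNN $\mathcal{T}$ with $t$ layers such that $\mathcal{T}(G)\neq\mathcal{T}(H)$.
   Context: All graphs are finite, simple and undirected, without isolated vertices; $N(v)$ denotes the neighborhood of $v$. An ordered edge of $G=(V,E)$ is a pair $(u,v)$ with $\{u,v\}\in E$. EB-1WL coloring: $\mathrm{eb}^{(0)}(G,(u,v))=1$ for every ordered edge, and $\mathrm{eb}^{(\ell+1)}(G,(u,v)) = \big(\mathrm{eb}^{(\ell)}(G,(u,v)),\ \{\!\{\mathrm{eb}^{(\ell)}(G,(u,x)) : x\in N(u)\}\!\},\ \{\!\{(\mathrm{eb}^{(\ell)}(G,(u,y)),\mathrm{eb}^{(\ell)}(G,(v,y))) : y\in N(u)\cap N(v)\}\!\},\ \{\!\{\mathrm{eb}^{(\ell)}(G,(v,z)) : z\in N(v)\}\!\}\big)$. $\mathrm{eb}^{(\ell)}(G)$ is the multiset of $\mathrm{eb}^{(\ell)}(G,(u,v))$ over all ordered edges. Graphs are distinguishable by EB-1WL if they have different numbers of vertices or there is $\ell$ with $\mathrm{eb}^{(\ell)}(G)\neq\mathrm{eb}^{(\ell)}(H)$. EB-GNN: a $d$-dimensional EB-GNN $\mathcal{T}$ with $t$ layers is given by real parameters $a_i,b_i,c_i,u_i,v_i\in\mathbb{R}^d$, $A_i,C_i,U_i,V_i\in\mathbb{R}^{d\times d}$, $B_i\in\mathbb{R}^{d\times 2d}$ for $i=1,\dots,t$.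 On $G$ it computes for every ordered edge $(u,v)$: $f^{(0)}(u,v)=(1,0,\dots,0)^T\in\mathbb{R}^d$, and for $1\le i\le t$: $\alpha^{(i)}(u)=\sum_{x\in N(u)}\mathrm{ReLU}(A_if^{(i-1)}(u,x)+a_i)$, $\beta^{(i)}(u,v)=\sum_{y\in N(u)\cap N(v)}\mathrm{ReLU}\big(B_i\binom{f^{(i-1)}(u,y)}{f^{(i-1)}(v,y)}+b_i\big)$, $\gamma^{(i)}(v)=\sum_{z\in N(v)}\mathrm{ReLU}(C_if^{(i-1)}(v,z)+c_i)$, $g^{(i)}(u,v)=f^{(i-1)}(u,v)+\alpha^{(i)}(u)+\beta^{(i)}(u,v)+\gamma^{(i)}(v)$, $f^{(i)}(u,v)=g^{(i)}(u,v)+V_i\,\mathrm{ReLU}(U_ig^{(i)}(u,v)+u_i)+v_i$, where $\mathrm{ReLU}(x)=\max\{0,x\}$ coordinatewise. The output is $\mathcal{T}(G)=\sum_{(u,v):\{u,v\}\in E}f^{(t)}(u,v)$ (sum over ordered edges). *)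

theory Defs
  imports Complex_Main "HOL-Library.Multiset"
begin

text \<open>A finite simple undirected graph without isolated vertices is given by its
finite edge set E of 2-element vertex sets; its vertex set is the union of the edges.\<close>

definition simple_graph :: "'a set set \<Rightarrow> bool" where
  "simple_graph E \<longleftrightarrow> finite E \<and> (\<forall>e\<in>E. card e = 2)"

definition verts :: "'a set set \<Rightarrow> 'a set" where
  "verts E = \<Union>E"

definition nbhd :: "'a set set \<Rightarrow> 'a \<Rightarrow> 'a set" where
  "nbhd E u = {x. {u, x} \<in> E}"

definition oedges :: "'a set set \<Rightarrow> ('a \<times> 'a) set" where
  "oedges E = {(u, v). {u, v} \<in> E}"

datatype color = Init | Col color "color multiset" "(color \<times> color) multiset" "color multiset"

fun eb :: "'a set set \<Rightarrow> nat \<Rightarrow> 'a \<times> 'a \<Rightarrow> color" where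
  "eb E 0 (u, v) = Init"
| "eb E (Suc l) (u, v) =
     Col (eb E l (u, v))
         (image_mset (\<lambda>x. eb E l (u, x)) (mset_set (nbhd E u)))
         (image_mset (\<lambda>y. (eb E l (u, y), eb E l (v, y))) (mset_set (nbhd E u \<inter> nbhd E v)))
         (image_mset (\<lambda>z. eb E l (v, z)) (mset_set (nbhd E v)))"

definition eb_colors :: "'a set set \<Rightarrow> nat \<Rightarrow> color multiset" where
  "eb_colors E l = image_mset (eb E l) (mset_set (oedges E))"

definition eb_distinguishable :: "'a set set \<Rightarrow> 'b set set \<Rightarrow> bool" where
  "eb_distinguishable G H \<longleftrightarrow>
     card (verts G) \<noteq> card (verts H) \<or> (\<exists>l. eb_colors G l \<noteq> eb_colors H l)"

text \<open>Vectors in R^d are functions nat => real of which only the coordinates < d matter;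
all operations only read coordinates < d. Parameters are indexed by the layer number i
(1-based); vectors are nat => real, d x d matrices nat => nat => real (row, column);
for B (d x 2d) column j < d acts on the first block and column d + j on the second.\<close>

record gnn_params =
  pa :: "nat \<Rightarrow> nat \<Rightarrow> real"
  pb :: "nat \<Rightarrow> nat \<Rightarrow> real"
  pc :: "nat \<Rightarrow> nat \<Rightarrow> real"
  pu :: "nat \<Rightarrow> nat \<Rightarrow> real"
  pv :: "nat \<Rightarrow> nat \<Rightarrow> real"
  pA :: "nat \<Rightarrow> nat \<Rightarrow> nat \<Rightarrow> real"
  pB :: "nat \<Rightarrow> nat \<Rightarrow> nat \<Rightarrow> real"
  pC :: "nat \<Rightarrow> nat \<Rightarrow> nat \<Rightarrow> real"
  pU :: "nat \<Rightarrow> nat \<Rightarrow> nat \<Rightarrow> real"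
  pV :: "nat \<Rightarrow> nat \<Rightarrow> nat \<Rightarrow> real"

definition relu :: "real \<Rightarrow> real" where
  "relu r = max 0 r"

definition mv :: "nat \<Rightarrow> (nat \<Rightarrow> nat \<Rightarrow> real) \<Rightarrow> (nat \<Rightarrow> real) \<Rightarrow> nat \<Rightarrow> real" where
  "mv d M x = (\<lambda>k. \<Sum>j<d. M k j * x j)"

definition mv2 :: "nat \<Rightarrow> (nat \<Rightarrow> nat \<Rightarrow> real) \<Rightarrow> (nat \<Rightarrow> real) \<Rightarrow> (nat \<Rightarrow> real) \<Rightarrow> nat \<Rightarrow> real" where
  "mv2 d M x y = (\<lambda>k. (\<Sum>j<d. M k j * x j) + (\<Sum>j<d. M k (d + j) * y j))"

fun feat :: "nat \<Rightarrow> gnn_params \<Rightarrow> 'a set set \<Rightarrow> nat \<Rightarrow> 'a \<times> 'a \<Rightarrow> nat \<Rightarrow> real" where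
  "feat d P E 0 (u, v) = (\<lambda>k. if k = 0 then 1 else 0)"
| "feat d P E (Suc i) (u, v) =
     (let l = Suc i;
          f = feat d P E i;
          \<alpha> = (\<lambda>k. \<Sum>x\<in>nbhd E u. relu (mv d (pA P l) (f (u, x)) k + pa P l k));
          \<beta> = (\<lambda>k. \<Sum>y\<in>nbhd E u \<inter> nbhd E v.
                   relu (mv2 d (pB P l) (f (u, y)) (f (v, y)) k + pb P l k));
          \<gamma> = (\<lambda>k. \<Sum>z\<in>nbhd E v. relu (mv d (pC P l) (f (v, z)) k + pc P l k));
          g = (\<lambda>k. f (u, v) k + \<alpha> k + \<beta> k + \<gamma> k);
          h = (\<lambda>k. relu (mv d (pU P l) g k + pu P l k))
      in (\<lambda>k. g k + mv d (pV P l) h k + pv P l k))"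

definition gnn_out :: "nat \<Rightarrow> nat \<Rightarrow> gnn_params \<Rightarrow> 'a set set \<Rightarrow> nat \<Rightarrow> real" where
  "gnn_out d t P E = (\<lambda>k. \<Sum>e\<in>oedges E. feat d P E t e k)"

definition gnn_differs :: "nat \<Rightarrow> nat \<Rightarrow> gnn_params \<Rightarrow> 'a set set \<Rightarrow> 'b set set \<Rightarrow> bool" where
  "gnn_differs d t P G H \<longleftrightarrow> (\<exists>k<d. gnn_out d t P G k \<noteq> gnn_out d t P H k)"

end

theory Submission
  imports Defs
begin

(* Each EB-1WL refinement step is simulated by one EB-GNN layer whose features on ordered edges
   are one-hot vectors of the current colours, numbered below N, the total number of ordered edges
   of G and H. The residual and the three aggregations produce the count vector of the refined
   colour: its own colour, the colours around u and around v, and the pairs of colours of common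
   neighbours, a pair (a, b) being detected as relu (x_a + y_b - 1). All entries are at most N, so
   the count vector read in base N + 1 is an integer S that determines the refined colour. The MLP
   cancels the count vector and evaluates hat (S - sigma c), which is 1 at 0 and vanishes at all
   other integers, against the code sigma c of the colour numbered c; this is the one-hot vector of
   the new colour. Summing the final features counts the colours, so different colour multisets
   give different outputs. Different numbers of vertices show up at level 1, since summing
   1 / deg u over the ordered edges (u, v) counts the vertices, and colour multisets that differ at
   some level differ at all later levels, so at least one layer can be used. *)

section \<open>Finiteness and degrees\<close>

lemma simple_graph_finite_verts: "simple_graph E \<Longrightarrow> finite (verts E)"
  unfolding simple_graph_def verts_def by (metis card.infinite finite_Union zero_neq_numeral)

lemma oedges_eq_Sigma: "oedges E = Sigma (verts E) (nbhd E)"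
  by (auto simp: oedges_def verts_def nbhd_def)

lemma oedges_subset_verts: "oedges E \<subseteq> verts E \<times> verts E"
  by (auto simp: oedges_def verts_def)

lemma simple_graph_finite_oedges: "simple_graph E \<Longrightarrow> finite (oedges E)"
  by (rule finite_subset[OF oedges_subset_verts]) (simp add: simple_graph_finite_verts)

lemma nbhd_subset_verts: "nbhd E u \<subseteq> verts E"
  by (auto simp: nbhd_def verts_def)

lemma simple_graph_finite_nbhd: "simple_graph E \<Longrightarrow> finite (nbhd E u)"
  by (rule finite_subset[OF nbhd_subset_verts]) (rule simple_graph_finite_verts)

lemma oedge_if_in_nbhd: "x \<in> nbhd E u \<Longrightarrow> (u, x) \<in> oedges E"
  by (simp add: nbhd_def oedges_def)

lemma card_nbhd_le_card_oedges: "simple_graph E \<Longrightarrow> card (nbhd E u) \<le> card (oedges E)"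
proof -
  assume "simple_graph E"
  have "card (nbhd E u) = card (Pair u ` nbhd E u)" by (simp add: card_image inj_on_def)
  also have "\<dots> \<le> card (oedges E)"
    using \<open>simple_graph E\<close> by (intro card_mono) (auto simp: simple_graph_finite_oedges oedge_if_in_nbhd)
  finally show ?thesis .
qed

lemma simple_graph_nbhd_nonempty:
  assumes "simple_graph E" and "u \<in> verts E"
  shows "nbhd E u \<noteq> {}"
proof -
  obtain e where "e \<in> E" "u \<in> e" using assms(2) by (auto simp: verts_def)
  moreover obtain x y where "e = {x, y}" using \<open>e \<in> E\<close> assms(1) by (auto simp: simple_graph_def card_2_iff)
  ultimately have "{u, x} \<in> E \<or> {u, y} \<in> E" by (metis insert_commute insert_iff singleton_iff)
  then show ?thesis by (auto simp: nbhd_def)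
qed

section \<open>EB-1WL colours\<close>

lemma eb_0: "eb E 0 e = Init"
  by (cases e) simp

fun own_color :: "color \<Rightarrow> color" where
  "own_color Init = Init"
| "own_color (Col a M P Q) = a"

lemma eb_colors_eq_image_own_color: "eb_colors E l = image_mset own_color (eb_colors E (Suc l))"
proof -
  have "own_color (eb E (Suc l) e) = eb E l e" for e by (cases e) simp
  then show ?thesis by (simp add: eb_colors_def multiset.map_comp comp_def)
qed

fun inverse_degree :: "color \<Rightarrow> real" where
  "inverse_degree Init = 0"
| "inverse_degree (Col a M P Q) = 1 / real (size M)"

lemma card_verts_eq_sum_inverse_degree:
  assumes "simple_graph E"
  shows "real (card (verts E)) = sum_mset (image_mset inverse_degree (eb_colors E 1))"
proof -
  have "sum_mset (image_mset inverse_degree (eb_colors E 1)) = (\<Sum>e\<in>oedges E. inverse_degree (eb E 1 e))"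
    by (simp add: eb_colors_def sum_unfold_sum_mset multiset.map_comp comp_def)
  also have "\<dots> = (\<Sum>(u, v)\<in>oedges E. 1 / real (card (nbhd E u)))"
    by (intro sum.cong) (auto simp: One_nat_def)
  also have "\<dots> = (\<Sum>u\<in>verts E. \<Sum>v\<in>nbhd E u. 1 / real (card (nbhd E u)))"
    unfolding oedges_eq_Sigma
    by (rule sum.Sigma[symmetric]) (use assms simple_graph_finite_verts simple_graph_finite_nbhd in auto)
  also have "\<dots> = (\<Sum>u\<in>verts E. 1)"
  proof (rule sum.cong)
    fix u assume "u \<in> verts E"
    then have "card (nbhd E u) > 0"
      by (simp add: card_gt_0_iff simple_graph_nbhd_nonempty[OF assms] simple_graph_finite_nbhd[OF assms])
    then show "(\<Sum>v\<in>nbhd E u. 1 / real (card (nbhd E u))) = 1" by simp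
  qed simp
  finally show ?thesis by simp
qed

lemma eb_distinguishable_imp_colors_differ:
  assumes "simple_graph G" and "simple_graph H" and "eb_distinguishable G H"
  shows "\<exists>L\<ge>1. eb_colors G L \<noteq> eb_colors H L"
proof (cases "card (verts G) = card (verts H)")
  case True
  then obtain l where "eb_colors G l \<noteq> eb_colors H l"
    using assms(3) by (auto simp: eb_distinguishable_def)
  then have "eb_colors G (Suc l) \<noteq> eb_colors H (Suc l)"
    using eb_colors_eq_image_own_color[of G l] eb_colors_eq_image_own_color[of H l] by metis
  then show ?thesis by (intro exI[of _ "Suc l"]) simp
next
  case False
  then have "eb_colors G 1 \<noteq> eb_colors H 1"
    using card_verts_eq_sum_inverse_degree[OF assms(1)] card_verts_eq_sum_inverse_degree[OF assms(2)] by auto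
  then show ?thesis by auto
qed

section \<open>Encoding colours by integers\<close>

definition code_dim :: "nat \<Rightarrow> nat" where
  "code_dim N = 3 * N + N * N"

definition pair_code :: "nat \<Rightarrow> (color \<Rightarrow> nat) \<Rightarrow> color \<times> color \<Rightarrow> nat" where
  "pair_code N ix = (\<lambda>(x, y). ix x * N + ix y)"

fun color_code :: "nat \<Rightarrow> (color \<Rightarrow> nat) \<Rightarrow> color \<Rightarrow> nat \<Rightarrow> nat" where
  "color_code N ix Init k = 0"
| "color_code N ix (Col a M P Q) k =
     (if k < N then (if k = ix a then 1 else 0)
      else if k < 2 * N then count (image_mset ix M) (k - N)
      else if k < 2 * N + N * N then count (image_mset (pair_code N ix) P) (k - 2 * N)
      else if k < code_dim N then count (image_mset ix Q) (k - (2 * N + N * N))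
      else 0)"

definition code_num :: "nat \<Rightarrow> (color \<Rightarrow> nat) \<Rightarrow> color \<Rightarrow> nat" where
  "code_num N ix col = (\<Sum>j<code_dim N. Suc N ^ j * color_code N ix col j)"

definition color_over :: "color set \<Rightarrow> nat \<Rightarrow> color \<Rightarrow> bool" where
  "color_over A n col \<longleftrightarrow> (\<exists>a M P Q. col = Col a M P Q \<and> a \<in> A \<and> set_mset M \<subseteq> A \<and>
     set_mset P \<subseteq> A \<times> A \<and> set_mset Q \<subseteq> A \<and> size M \<le> n \<and> size P \<le> n \<and> size Q \<le> n)"

lemma color_over_mono:
  assumes "color_over A n col" and "A \<subseteq> B" and "n \<le> m"
  shows "color_over B m col"
proof -
  obtain a M P Q where "col = Col a M P Q" "a \<in> A" "set_mset M \<subseteq> A" "set_mset P \<subseteq> A \<times> A"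
    "set_mset Q \<subseteq> A" "size M \<le> n" "size P \<le> n" "size Q \<le> n"
    using assms(1) unfolding color_over_def by blast
  with assms(2,3) show ?thesis
    unfolding color_over_def by (intro exI[of _ a] exI[of _ M] exI[of _ P] exI[of _ Q]) auto
qed

lemma color_over_eb:
  assumes "simple_graph E" and "(u, v) \<in> oedges E"
  shows "color_over (eb E i ` oedges E) (card (oedges E)) (eb E (Suc i) (u, v))"
proof -
  have "card (nbhd E u \<inter> nbhd E v) \<le> card (nbhd E u)"
    using simple_graph_finite_nbhd[OF assms(1)] by (simp add: card_mono)
  then have "card (nbhd E u \<inter> nbhd E v) \<le> card (oedges E)"
    using card_nbhd_le_card_oedges[OF assms(1), of u] by linarith
  then show ?thesis
    using assms card_nbhd_le_card_oedges[OF assms(1)] simple_graph_finite_nbhd[OF assms(1)]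
    unfolding color_over_def by (auto simp: oedge_if_in_nbhd)
qed

lemma color_code_le:
  assumes "color_over A N col"
  shows "color_code N ix col k \<le> N"
proof -
  obtain a M P Q where col: "col = Col a M P Q" "size M \<le> N" "size P \<le> N" "size Q \<le> N"
    using assms unfolding color_over_def by blast
  have "count (image_mset ix M) j \<le> N" "count (image_mset (pair_code N ix) P) j \<le> N"
    "count (image_mset ix Q) j \<le> N" for j
    using col count_le_size le_trans size_image_mset by metis+
  then show ?thesis using col by auto
qed

lemma color_code_beyond_code_dim: "code_dim N \<le> k \<Longrightarrow> color_code N ix col k = 0"
  by (cases col) (auto simp: code_dim_def)

lemma digits_eq_if_sums_eq:
  fixes a b :: "nat \<Rightarrow> nat"
  assumes "\<forall>j<n. a j < B" and "\<forall>j<n. b j < B" and "(\<Sum>j<n. B ^ j * a j) = (\<Sum>j<n. B ^ j * b j)"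
  shows "\<forall>j<n. a j = b j"
  using assms
proof (induction n arbitrary: a b)
  case (Suc n)
  have shift: "(\<Sum>j<Suc n. B ^ j * c j) = c 0 + B * (\<Sum>j<n. B ^ j * c (Suc j))" for c :: "nat \<Rightarrow> nat"
    by (simp only: sum.lessThan_Suc_shift) (simp add: sum_distrib_left mult.assoc)
  have "a 0 < B" "b 0 < B" using Suc.prems by auto
  moreover have sums: "a 0 + B * (\<Sum>j<n. B ^ j * a (Suc j)) = b 0 + B * (\<Sum>j<n. B ^ j * b (Suc j))"
    using Suc.prems(3) shift by metis
  ultimately have "a 0 = b 0"
    by (metis mod_less mod_mult_self2)
  with sums \<open>a 0 < B\<close> have "(\<Sum>j<n. B ^ j * a (Suc j)) = (\<Sum>j<n. B ^ j * b (Suc j))" by simp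
  then have "\<forall>j<n. a (Suc j) = b (Suc j)"
    using Suc.prems by (intro Suc.IH) auto
  with \<open>a 0 = b 0\<close> show ?case by (auto simp: less_Suc_eq_0_disj)
qed simp

lemma pair_code_less: "\<forall>c\<in>A. ix c < N \<Longrightarrow> \<forall>p\<in>A \<times> A. pair_code N ix p < N * N"
proof
  fix p assume bound: "\<forall>c\<in>A. ix c < N" and "p \<in> A \<times> A"
  then obtain x y where p: "p = (x, y)" "x \<in> A" "y \<in> A" by blast
  have "ix x * N + ix y < (ix x + 1) * N" using bound p by simp
  also have "\<dots> \<le> N * N" using bound p by (intro mult_le_mono1) auto
  finally show "pair_code N ix p < N * N" by (simp add: pair_code_def p)
qed

lemma pair_code_inj_on:
  assumes "inj_on ix A" and "\<forall>c\<in>A. ix c < N"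
  shows "inj_on (pair_code N ix) (A \<times> A)"
proof (rule inj_onI, clarify)
  fix x y x' y' assume xy: "x \<in> A" "y \<in> A" "x' \<in> A" "y' \<in> A"
    and eq: "pair_code N ix (x, y) = pair_code N ix (x', y')"
  then have "N > 0" using assms(2) by auto
  have "ix x = ix x'" using arg_cong[OF eq, of "\<lambda>n. n div N"] xy assms(2) \<open>N > 0\<close> by (simp add: pair_code_def)
  moreover have "ix y = ix y'" using arg_cong[OF eq, of "\<lambda>n. n mod N"] xy assms(2) by (simp add: pair_code_def)
  ultimately show "x = x' \<and> y = y'" using assms(1) xy by (auto dest: inj_onD)
qed

lemma multiset_eq_if_counts_below:
  fixes X Y :: "nat multiset"
  assumes "\<forall>x\<in>#X. x < n" and "\<forall>x\<in>#Y. x < n" and "\<And>j. j < n \<Longrightarrow> count X j = count Y j"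
  shows "X = Y"
proof (rule multiset_eqI)
  fix j show "count X j = count Y j"
  proof (cases "j < n")
    case False
    then have "j \<notin># X" and "j \<notin># Y" using assms(1,2) by auto
    then show ?thesis by (simp add: not_in_iff)
  qed (use assms(3) in auto)
qed

lemma multiset_eq_if_image_counts_below:
  fixes f :: "'a \<Rightarrow> nat"
  assumes "inj_on f A" and "set_mset M \<subseteq> A" and "set_mset M' \<subseteq> A" and "\<forall>x\<in>A. f x < n"
    and "\<And>j. j < n \<Longrightarrow> count (image_mset f M) j = count (image_mset f M') j"
  shows "M = M'"
proof -
  have "image_mset f M = image_mset f M'"
  proof (rule multiset_eq_if_counts_below)
    show "\<forall>x\<in>#image_mset f M. x < n" and "\<forall>x\<in>#image_mset f M'. x < n"
      using assms(2-4) by auto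
  qed (rule assms(5))
  moreover have "inj_on f (set_mset M \<union> set_mset M')"
    using assms(2,3) by (intro inj_on_subset[OF assms(1)]) auto
  ultimately show ?thesis using image_mset_eq_image_mset_plusD[of f M M' "{#}"] by auto
qed

lemma color_code_inj:
  assumes "color_over A N col" and "color_over A N col'" and "inj_on ix A" and "\<forall>c\<in>A. ix c < N"
    and eq: "\<And>k. k < code_dim N \<Longrightarrow> color_code N ix col k = color_code N ix col' k"
  shows "col = col'"
proof -
  obtain a M P Q where col: "col = Col a M P Q" "a \<in> A" "set_mset M \<subseteq> A" "set_mset P \<subseteq> A \<times> A" "set_mset Q \<subseteq> A"
    using assms(1) unfolding color_over_def by blast
  obtain a' M' P' Q' where col': "col' = Col a' M' P' Q'" "a' \<in> A" "set_mset M' \<subseteq> A" "set_mset P' \<subseteq> A \<times> A" "set_mset Q' \<subseteq> A"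
    using assms(2) unfolding color_over_def by blast
  have "ix a = ix a'"
    using eq[of "ix a"] col col' assms(4) by (auto simp: code_dim_def split: if_splits)
  then have "a = a'" using assms(3) col(2) col'(2) by (auto dest: inj_onD)
  have "count (image_mset ix M) j = count (image_mset ix M') j" if "j < N" for j
    using eq[of "N + j"] that col col' by (simp add: code_dim_def)
  then have "M = M'" by (rule multiset_eq_if_image_counts_below[OF assms(3) col(3) col'(3) assms(4)])
  have "count (image_mset ix Q) j = count (image_mset ix Q') j" if "j < N" for j
    using eq[of "2 * N + N * N + j"] that col col' by (simp add: code_dim_def)
  then have "Q = Q'" by (rule multiset_eq_if_image_counts_below[OF assms(3) col(5) col'(5) assms(4)])
  have "count (image_mset (pair_code N ix) P) j = count (image_mset (pair_code N ix) P') j"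
    if "j < N * N" for j
    using eq[of "2 * N + j"] that col col' by (simp add: code_dim_def)
  then have "P = P'"
    by (rule multiset_eq_if_image_counts_below[OF pair_code_inj_on[OF assms(3,4)] col(4) col'(4)
          pair_code_less[OF assms(4)]])
  show ?thesis using col col' \<open>a = a'\<close> \<open>M = M'\<close> \<open>P = P'\<close> \<open>Q = Q'\<close> by simp
qed

lemma code_num_inj_on:
  assumes "inj_on ix A" and "\<forall>c\<in>A. ix c < N"
  shows "inj_on (code_num N ix) (Collect (color_over A N))"
proof (rule inj_onI, simp)
  fix col col' assume over: "color_over A N col" "color_over A N col'"
    and "code_num N ix col = code_num N ix col'"
  then have "\<forall>j<code_dim N. color_code N ix col j = color_code N ix col' j"
    using color_code_le[OF over(1)] color_code_le[OF over(2)]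
    by (intro digits_eq_if_sums_eq[where B = "Suc N"]) (auto simp: code_num_def le_imp_less_Suc)
  then show "col = col'" using color_code_inj[OF over assms] by blast
qed

section \<open>An EB-GNN simulating EB-1WL\<close>

definition onehot :: "nat \<Rightarrow> nat \<Rightarrow> real" where
  "onehot c k = (if k = c then 1 else 0)"

definition hat :: "real \<Rightarrow> real" where
  "hat z = relu (z + 1) - 2 * relu z + relu (z - 1)"

lemma hat_of_int: "hat (of_int z) = (if z = 0 then 1 else 0)"
proof -
  consider "z \<le> -1" | "z = 0" | "z \<ge> 1" by linarith
  then show ?thesis
  proof cases
    case 1
    then have "(of_int z :: real) \<le> -1" by simp
    with 1 show ?thesis by (simp add: hat_def relu_def)
  next
    case 3
    then have "(of_int z :: real) \<ge> 1" by simp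
    with 3 show ?thesis by (simp add: hat_def relu_def)
  qed (simp add: hat_def relu_def)
qed

lemma hat_thresholds_exist:
  fixes S f :: "'c \<Rightarrow> nat"
  assumes "inj_on S A" and "inj_on f A"
  shows "\<exists>\<sigma>. \<forall>x\<in>A. \<forall>c. hat (real (S x) - \<sigma> c) = onehot (f x) c"
proof -
  define \<sigma> where "\<sigma> c = (if c \<in> f ` A then real (S (inv_into A f c)) else -1)" for c
  have "hat (real (S x) - \<sigma> c) = onehot (f x) c" if "x \<in> A" for x c
  proof (cases "c \<in> f ` A")
    case True
    then obtain y where y: "y \<in> A" "c = f y" by blast
    then have "\<sigma> c = real (S y)" using assms(2) by (simp add: \<sigma>_def)
    then have "hat (real (S x) - \<sigma> c) = hat (of_int (int (S x) - int (S y)))" by simp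
    also have "\<dots> = (if x = y then 1 else 0)"
      unfolding hat_of_int using inj_on_eq_iff[OF assms(1) that y(1)] by simp
    also have "\<dots> = onehot (f x) c"
      using inj_on_eq_iff[OF assms(2) that y(1)] y by (auto simp: onehot_def)
    finally show ?thesis .
  next
    case False
    then have "hat (real (S x) - \<sigma> c) = hat (of_int (int (S x) + 1))" by (simp add: \<sigma>_def)
    also have "\<dots> = 0" by (simp only: hat_of_int) simp
    also have "\<dots> = onehot (f x) c" using False that by (auto simp: onehot_def)
    finally show ?thesis .
  qed
  then show ?thesis by blast
qed

(* After aggregation the coordinates below code_dim N hold
   the colour code of the refined colour, and the 3 N coordinates above are hidden units of the
   MLP, three for each colour index c, computing relu (S - s c + 1 - r) for r < 3, where S is the
   colour code read in base N + 1. The output matrix cancels the colour code and writes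
   hat (S - s c) into coordinate c. Layer l computes level l from level l - 1, hence the thresholds
   sigma (l - 1) in sim_params. *)
definition gnn_dim :: "nat \<Rightarrow> nat" where
  "gnn_dim N = code_dim N + 3 * N"

definition shift_mat :: "nat \<Rightarrow> nat \<Rightarrow> nat \<Rightarrow> nat \<Rightarrow> real" where
  "shift_mat off N k j = (if off \<le> k \<and> k < off + N \<and> j = k - off then 1 else 0)"

definition pair_mat :: "nat \<Rightarrow> nat \<Rightarrow> nat \<Rightarrow> real" where
  "pair_mat N k j =
     (if 2 * N \<le> k \<and> k < 2 * N + N * N \<and> (j = (k - 2 * N) div N \<or> j = gnn_dim N + (k - 2 * N) mod N)
      then 1 else 0)"

definition pair_bias :: "nat \<Rightarrow> nat \<Rightarrow> real" where
  "pair_bias N k = (if 2 * N \<le> k \<and> k < 2 * N + N * N then -1 else 0)"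

definition mlp_in_mat :: "nat \<Rightarrow> nat \<Rightarrow> nat \<Rightarrow> real" where
  "mlp_in_mat N m j =
     (if m < code_dim N then (if j = m then 1 else 0)
      else if m < gnn_dim N \<and> j < code_dim N then real (Suc N ^ j) else 0)"

definition mlp_in_bias :: "nat \<Rightarrow> (nat \<Rightarrow> real) \<Rightarrow> nat \<Rightarrow> real" where
  "mlp_in_bias N s m =
     (if code_dim N \<le> m \<and> m < gnn_dim N
      then 1 - real ((m - code_dim N) mod 3) - s ((m - code_dim N) div 3) else 0)"

definition mlp_out_mat :: "nat \<Rightarrow> nat \<Rightarrow> nat \<Rightarrow> real" where
  "mlp_out_mat N k m =
     (if k < code_dim N \<and> m = k then -1 else 0) +
     (if k < N \<and> m = code_dim N + 3 * k then 1 else 0) +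
     (if k < N \<and> m = code_dim N + 3 * k + 1 then -2 else 0) +
     (if k < N \<and> m = code_dim N + 3 * k + 2 then 1 else 0)"

definition sim_params :: "nat \<Rightarrow> (nat \<Rightarrow> nat \<Rightarrow> real) \<Rightarrow> gnn_params" where
  "sim_params N \<sigma> =
     \<lparr>pa = \<lambda>l k. 0, pb = \<lambda>l. pair_bias N, pc = \<lambda>l k. 0, pu = \<lambda>l. mlp_in_bias N (\<sigma> (l - 1)),
      pv = \<lambda>l k. 0, pA = \<lambda>l. shift_mat N N, pB = \<lambda>l. pair_mat N,
      pC = \<lambda>l. shift_mat (2 * N + N * N) N, pU = \<lambda>l. mlp_in_mat N, pV = \<lambda>l. mlp_out_mat N\<rparr>"

definition aggregate :: "nat \<Rightarrow> ('a \<times> 'a \<Rightarrow> nat \<Rightarrow> real) \<Rightarrow> 'a set set \<Rightarrow> 'a \<times> 'a \<Rightarrow> nat \<Rightarrow> real" where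
  "aggregate N f E = (\<lambda>(u, v) k. f (u, v) k
     + (\<Sum>x\<in>nbhd E u. relu (mv (gnn_dim N) (shift_mat N N) (f (u, x)) k))
     + (\<Sum>y\<in>nbhd E u \<inter> nbhd E v.
          relu (mv2 (gnn_dim N) (pair_mat N) (f (u, y)) (f (v, y)) k + pair_bias N k))
     + (\<Sum>z\<in>nbhd E v. relu (mv (gnn_dim N) (shift_mat (2 * N + N * N) N) (f (v, z)) k)))"

definition sim_mlp :: "nat \<Rightarrow> (nat \<Rightarrow> real) \<Rightarrow> (nat \<Rightarrow> real) \<Rightarrow> nat \<Rightarrow> real" where
  "sim_mlp N s g = (\<lambda>k. g k + mv (gnn_dim N) (mlp_out_mat N)
     (\<lambda>m. relu (mv (gnn_dim N) (mlp_in_mat N) g m + mlp_in_bias N s m)) k)"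

lemma feat_sim_params_Suc:
  "feat (gnn_dim N) (sim_params N \<sigma>) E (Suc i) e =
     sim_mlp N (\<sigma> i) (aggregate N (feat (gnn_dim N) (sim_params N \<sigma>) E i) E e)"
  by (cases e) (simp add: sim_params_def aggregate_def sim_mlp_def Let_def)

lemma sum_lessThan_delta_mult:
  fixes n a :: nat and x :: "nat \<Rightarrow> real"
  shows "(\<Sum>j<n. (if j = a then c else 0) * x j) = (if a < n then c * x a else 0)"
proof -
  have "(\<Sum>j<n. (if j = a then c else 0) * x j) = (\<Sum>j<n. if j = a then c * x j else 0)"
    by (rule sum.cong) auto
  also have "\<dots> = (if a < n then c * x a else 0)"
    by (subst sum.delta) auto
  finally show ?thesis .
qed

lemma mv_shift_mat:
  assumes "N \<le> d"
  shows "mv d (shift_mat off N) x k = (if off \<le> k \<and> k < off + N then x (k - off) else 0)"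
proof (cases "off \<le> k \<and> k < off + N")
  case True
  then have "shift_mat off N k = (\<lambda>j. if j = k - off then 1 else 0)" by (auto simp: shift_mat_def)
  moreover have "k - off < d" using True assms by linarith
  ultimately show ?thesis using True by (simp add: mv_def sum_lessThan_delta_mult)
qed (auto simp: mv_def shift_mat_def)

lemma mv2_pair_mat:
  "mv2 (gnn_dim N) (pair_mat N) x y k + pair_bias N k =
     (if 2 * N \<le> k \<and> k < 2 * N + N * N then x ((k - 2 * N) div N) + y ((k - 2 * N) mod N) - 1 else 0)"
proof (cases "2 * N \<le> k \<and> k < 2 * N + N * N")
  case True
  define q where "q = k - 2 * N"
  have "q < N * N" using True unfolding q_def by linarith
  moreover from this have "0 < N" by (cases N) auto
  ultimately have "q div N < N" and "q mod N < N" by (auto simp: less_mult_imp_div_less)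
  moreover have "N \<le> gnn_dim N" by (simp add: gnn_dim_def code_dim_def)
  ultimately have "q div N < gnn_dim N" and "q mod N < gnn_dim N" by linarith+
  have "pair_mat N k j = (if j = q div N then 1 else 0)" if "j < gnn_dim N" for j
    using True that by (auto simp: pair_mat_def q_def)
  then have "(\<Sum>j<gnn_dim N. pair_mat N k j * x j) = (\<Sum>j<gnn_dim N. (if j = q div N then 1 else 0) * x j)"
    by (intro sum.cong) simp_all
  also have "\<dots> = x (q div N)" using \<open>q div N < gnn_dim N\<close> by (simp add: sum_lessThan_delta_mult)
  finally have "(\<Sum>j<gnn_dim N. pair_mat N k j * x j) = x (q div N)" .
  moreover have "pair_mat N k (gnn_dim N + j) = (if j = q mod N then 1 else 0)" for j
    using True \<open>q div N < gnn_dim N\<close> by (auto simp: pair_mat_def q_def)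
  then have "(\<Sum>j<gnn_dim N. pair_mat N k (gnn_dim N + j) * y j) = y (q mod N)"
    using \<open>q mod N < gnn_dim N\<close> by (simp add: sum_lessThan_delta_mult)
  ultimately show ?thesis using True by (simp add: mv2_def pair_bias_def q_def)
qed (auto simp: mv2_def pair_mat_def pair_bias_def)

lemma sum_onehot_eq_count: "(\<Sum>x\<in>A. onehot (c x) j) = real (count (image_mset c (mset_set A)) j)"
proof (cases "finite A")
  case True
  then show ?thesis by (induction A rule: finite_induct) (auto simp: onehot_def)
qed simp

lemma sum_relu_shift_mat_onehot:
  assumes "N \<le> d" and "\<And>x j. x \<in> A \<Longrightarrow> j < d \<Longrightarrow> \<phi> x j = onehot (c x) j"
  shows "(\<Sum>x\<in>A. relu (mv d (shift_mat off N) (\<phi> x) k)) =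
    (if off \<le> k \<and> k < off + N then real (count (image_mset c (mset_set A)) (k - off)) else 0)"
proof (cases "off \<le> k \<and> k < off + N")
  case True
  then have "k - off < d" using assms(1) by linarith
  then have "(\<Sum>x\<in>A. relu (mv d (shift_mat off N) (\<phi> x) k)) = (\<Sum>x\<in>A. onehot (c x) (k - off))"
    using True assms by (intro sum.cong) (simp_all add: mv_shift_mat relu_def onehot_def)
  with True show ?thesis by (simp add: sum_onehot_eq_count)
qed (auto simp: mv_shift_mat[OF assms(1)] relu_def)

lemma sum_relu_pair_mat_onehot:
  assumes "\<And>y j. y \<in> A \<Longrightarrow> j < gnn_dim N \<Longrightarrow> \<phi> y j = onehot (a y) j"
    and "\<And>y j. y \<in> A \<Longrightarrow> j < gnn_dim N \<Longrightarrow> \<psi> y j = onehot (b y) j"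
    and "\<And>y. y \<in> A \<Longrightarrow> b y < N"
  shows "(\<Sum>y\<in>A. relu (mv2 (gnn_dim N) (pair_mat N) (\<phi> y) (\<psi> y) k + pair_bias N k)) =
    (if 2 * N \<le> k \<and> k < 2 * N + N * N
     then real (count (image_mset (\<lambda>y. a y * N + b y) (mset_set A)) (k - 2 * N)) else 0)"
proof (cases "2 * N \<le> k \<and> k < 2 * N + N * N")
  case True
  define q where "q = k - 2 * N"
  have "q < N * N" using True unfolding q_def by linarith
  moreover from this have "0 < N" by (cases N) auto
  ultimately have "q div N < N" and "q mod N < N" by (auto simp: less_mult_imp_div_less)
  moreover have "N \<le> gnn_dim N" by (simp add: gnn_dim_def code_dim_def)
  ultimately have "q div N < gnn_dim N" and "q mod N < gnn_dim N" by linarith+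
  have "relu (\<phi> y (q div N) + \<psi> y (q mod N) - 1) = onehot (a y * N + b y) q" if "y \<in> A" for y
  proof -
    have "q = a y * N + b y \<longleftrightarrow> q div N = a y \<and> q mod N = b y"
    proof
      assume "q = a y * N + b y"
      then show "q div N = a y \<and> q mod N = b y" using assms(3)[OF that] by simp
    qed (metis div_mult_mod_eq)
    then show ?thesis
      using assms(1,2)[OF that] \<open>q div N < gnn_dim N\<close> \<open>q mod N < gnn_dim N\<close>
      by (auto simp: relu_def onehot_def)
  qed
  then show ?thesis using True by (simp add: mv2_pair_mat sum_onehot_eq_count q_def cong: sum.cong)
qed (auto simp: mv2_pair_mat relu_def)

lemma aggregate_eq_color_code:
  fixes E :: "'a set set" and f :: "'a \<times> 'a \<Rightarrow> nat \<Rightarrow> real"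
  assumes onehot: "\<And>e j. e \<in> oedges E \<Longrightarrow> j < gnn_dim N \<Longrightarrow> f e j = onehot (ix (eb E i e)) j"
    and bounded: "\<And>e. e \<in> oedges E \<Longrightarrow> ix (eb E i e) < N"
    and uv: "(u, v) \<in> oedges E" and k: "k < gnn_dim N"
  shows "aggregate N f E (u, v) k = real (color_code N ix (eb E (Suc i) (u, v)) k)"
proof -
  have N_le: "N \<le> gnn_dim N" by (simp add: gnn_dim_def code_dim_def)
  have "f (u, v) k = (if k = ix (eb E i (u, v)) then 1 else 0)"
    using onehot[OF uv k] by (simp add: onehot_def)
  moreover have "(\<Sum>x\<in>nbhd E u. relu (mv (gnn_dim N) (shift_mat N N) (f (u, x)) k)) =
      (if N \<le> k \<and> k < N + N
       then real (count (image_mset (\<lambda>x. ix (eb E i (u, x))) (mset_set (nbhd E u))) (k - N)) else 0)"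
    by (rule sum_relu_shift_mat_onehot[OF N_le]) (simp add: onehot oedge_if_in_nbhd)
  moreover have "(\<Sum>y\<in>nbhd E u \<inter> nbhd E v.
        relu (mv2 (gnn_dim N) (pair_mat N) (f (u, y)) (f (v, y)) k + pair_bias N k)) =
      (if 2 * N \<le> k \<and> k < 2 * N + N * N
       then real (count (image_mset (\<lambda>y. ix (eb E i (u, y)) * N + ix (eb E i (v, y)))
         (mset_set (nbhd E u \<inter> nbhd E v))) (k - 2 * N)) else 0)"
    by (rule sum_relu_pair_mat_onehot) (simp_all add: onehot bounded oedge_if_in_nbhd)
  moreover have "(\<Sum>z\<in>nbhd E v. relu (mv (gnn_dim N) (shift_mat (2 * N + N * N) N) (f (v, z)) k)) =
      (if 2 * N + N * N \<le> k \<and> k < 2 * N + N * N + N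
       then real (count (image_mset (\<lambda>z. ix (eb E i (v, z))) (mset_set (nbhd E v)))
         (k - (2 * N + N * N))) else 0)"
    by (rule sum_relu_shift_mat_onehot[OF N_le]) (simp add: onehot oedge_if_in_nbhd)
  ultimately show ?thesis
    using bounded[OF uv] k
    by (auto simp: aggregate_def multiset.map_comp comp_def pair_code_def gnn_dim_def code_dim_def)
qed

lemma mv_mlp_in_mat_code: "m < code_dim N \<Longrightarrow> mv (gnn_dim N) (mlp_in_mat N) g m = g m"
proof -
  assume m: "m < code_dim N"
  then have "mv (gnn_dim N) (mlp_in_mat N) g m = (\<Sum>j<gnn_dim N. (if j = m then 1 else 0) * g j)"
    unfolding mv_def by (intro sum.cong) (auto simp: mlp_in_mat_def)
  also have "\<dots> = g m" using m by (simp add: sum_lessThan_delta_mult gnn_dim_def)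
  finally show ?thesis .
qed

lemma mv_mlp_in_mat_hidden:
  assumes "code_dim N \<le> m" and "m < gnn_dim N"
  shows "mv (gnn_dim N) (mlp_in_mat N) g m = (\<Sum>j<code_dim N. real (Suc N ^ j) * g j)"
proof -
  have "mv (gnn_dim N) (mlp_in_mat N) g m =
      (\<Sum>j<gnn_dim N. (if j < code_dim N then real (Suc N ^ j) else 0) * g j)"
    unfolding mv_def using assms by (intro sum.cong) (auto simp: mlp_in_mat_def)
  also have "\<dots> = (\<Sum>j<code_dim N. (if j < code_dim N then real (Suc N ^ j) else 0) * g j)"
    by (intro sum.mono_neutral_right) (auto simp: gnn_dim_def)
  also have "\<dots> = (\<Sum>j<code_dim N. real (Suc N ^ j) * g j)" by (intro sum.cong) auto
  finally show ?thesis .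
qed

lemma mv_mlp_out_mat:
  assumes "k < gnn_dim N"
  shows "mv (gnn_dim N) (mlp_out_mat N) h k = (if k < code_dim N then - h k else 0) +
    (if k < N then h (code_dim N + 3 * k) - 2 * h (code_dim N + 3 * k + 1) + h (code_dim N + 3 * k + 2)
     else 0)"
proof -
  have "mv (gnn_dim N) (mlp_out_mat N) h k =
      (\<Sum>j<gnn_dim N. (if j = k then (if k < code_dim N then -1 else 0) else 0) * h j
        + (if j = code_dim N + 3 * k then (if k < N then 1 else 0) else 0) * h j
        + (if j = code_dim N + 3 * k + 1 then (if k < N then -2 else 0) else 0) * h j
        + (if j = code_dim N + 3 * k + 2 then (if k < N then 1 else 0) else 0) * h j)"
    unfolding mv_def by (intro sum.cong) (auto simp: mlp_out_mat_def algebra_simps)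
  then show ?thesis using assms by (simp add: sum.distrib sum_lessThan_delta_mult gnn_dim_def)
qed

lemma sim_mlp_eq_hat:
  fixes g :: "nat \<Rightarrow> real"
  assumes nonneg: "\<And>j. j < code_dim N \<Longrightarrow> 0 \<le> g j"
    and k: "k < gnn_dim N" and vanish: "code_dim N \<le> k \<Longrightarrow> g k = 0"
  shows "sim_mlp N s g k = (if k < N then hat ((\<Sum>j<code_dim N. real (Suc N ^ j) * g j) - s k) else 0)"
proof -
  define S where "S = (\<Sum>j<code_dim N. real (Suc N ^ j) * g j)"
  define h where "h = (\<lambda>m. relu (mv (gnn_dim N) (mlp_in_mat N) g m + mlp_in_bias N s m))"
  have h_code: "h m = g m" if "m < code_dim N" for m
    using that nonneg[OF that] by (simp add: h_def mv_mlp_in_mat_code mlp_in_bias_def relu_def)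
  have h_hidden: "h (code_dim N + 3 * c + r) = relu (S - s c + 1 - real r)" if "c < N" and "r < 3" for c r
  proof -
    have "code_dim N + 3 * c + r < gnn_dim N" using that by (simp add: gnn_dim_def)
    then have "mv (gnn_dim N) (mlp_in_mat N) g (code_dim N + 3 * c + r) = S"
      unfolding S_def by (intro mv_mlp_in_mat_hidden) auto
    moreover have "(3 * c + r) mod 3 = r" and "(3 * c + r) div 3 = c" using \<open>r < 3\<close> by auto
    ultimately show ?thesis using \<open>code_dim N + 3 * c + r < gnn_dim N\<close>
      by (simp add: h_def mlp_in_bias_def algebra_simps)
  qed
  have "N \<le> code_dim N" by (simp add: code_dim_def)
  have "sim_mlp N s g k = g k + mv (gnn_dim N) (mlp_out_mat N) h k"
    by (simp add: sim_mlp_def h_def)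
  also have "\<dots> = (if k < N then hat (S - s k) else 0)"
  proof (cases "k < N")
    case True
    then show ?thesis
      using mv_mlp_out_mat[OF k, where h = h] h_code[of k] h_hidden[of k 0] h_hidden[of k 1] h_hidden[of k 2]
        \<open>N \<le> code_dim N\<close>
      by (simp add: hat_def algebra_simps)
  next
    case False
    then show ?thesis using mv_mlp_out_mat[OF k, where h = h] h_code[of k] vanish by simp
  qed
  finally show ?thesis by (simp add: S_def)
qed

lemma feat_sim_params_Suc_onehot:
  fixes E :: "'a set set"
  assumes IH: "\<And>e j. e \<in> oedges E \<Longrightarrow> j < gnn_dim N \<Longrightarrow>
      feat (gnn_dim N) (sim_params N \<sigma>) E i e j = onehot (ix (eb E i e)) j"
    and bounded: "\<And>e. e \<in> oedges E \<Longrightarrow> ix (eb E i e) < N"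
    and uv: "(u, v) \<in> oedges E"
    and hat: "\<And>c. c < N \<Longrightarrow> hat (real (code_num N ix (eb E (Suc i) (u, v))) - \<sigma> i c) = onehot c' c"
    and "c' < N" and "k < gnn_dim N"
  shows "feat (gnn_dim N) (sim_params N \<sigma>) E (Suc i) (u, v) k = onehot c' k"
proof -
  define col where "col = eb E (Suc i) (u, v)"
  define g where "g = aggregate N (feat (gnn_dim N) (sim_params N \<sigma>) E i) E (u, v)"
  have g: "g j = real (color_code N ix col j)" if "j < gnn_dim N" for j
    unfolding g_def col_def using IH bounded uv that by (rule aggregate_eq_color_code)
  have "code_dim N \<le> gnn_dim N" by (simp add: gnn_dim_def)
  then have "(\<Sum>j<code_dim N. real (Suc N ^ j) * g j) = (\<Sum>j<code_dim N. real (Suc N ^ j * color_code N ix col j))"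
    using g by (intro sum.cong) auto
  also have "\<dots> = real (code_num N ix col)" by (simp add: code_num_def)
  finally have code: "(\<Sum>j<code_dim N. real (Suc N ^ j) * g j) = real (code_num N ix col)" .
  have "feat (gnn_dim N) (sim_params N \<sigma>) E (Suc i) (u, v) k = sim_mlp N (\<sigma> i) g k"
    by (simp only: feat_sim_params_Suc g_def)
  also have "\<dots> = (if k < N then hat ((\<Sum>j<code_dim N. real (Suc N ^ j) * g j) - \<sigma> i k) else 0)"
    using g \<open>code_dim N \<le> gnn_dim N\<close> \<open>k < gnn_dim N\<close>
    by (intro sim_mlp_eq_hat) (auto simp: color_code_beyond_code_dim)
  also have "\<dots> = onehot c' k"
  proof (cases "k < N")
    case True
    then show ?thesis using hat[OF True] unfolding code col_def by simp
  next
    case False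
    then show ?thesis using \<open>c' < N\<close> by (simp add: onehot_def)
  qed
  finally show ?thesis .
qed

definition tracks_colors ::
    "(nat \<Rightarrow> color set) \<Rightarrow> nat \<Rightarrow> (nat \<Rightarrow> color \<Rightarrow> nat) \<Rightarrow> (nat \<Rightarrow> nat \<Rightarrow> real) \<Rightarrow> bool" where
  "tracks_colors C N idx \<sigma> \<longleftrightarrow>
     (\<forall>l. inj_on (idx l) (C l) \<and> (\<forall>c\<in>C l. idx l c < N)) \<and> (\<forall>c\<in>C 0. idx 0 c = 0) \<and>
     (\<forall>i. \<forall>col\<in>C (Suc i). \<forall>c. hat (real (code_num N (idx i) col) - \<sigma> i c) = onehot (idx (Suc i) col) c)"

lemma feat_sim_params_onehot:
  fixes E :: "'a set set"
  assumes tracks: "tracks_colors C N idx \<sigma>" and colors: "\<And>i e. e \<in> oedges E \<Longrightarrow> eb E i e \<in> C i"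
  shows "e \<in> oedges E \<Longrightarrow> k < gnn_dim N \<Longrightarrow>
    feat (gnn_dim N) (sim_params N \<sigma>) E i e k = onehot (idx i (eb E i e)) k"
proof (induction i arbitrary: e k)
  case 0
  then have "idx 0 Init = 0" using tracks colors[of e 0] by (simp add: tracks_colors_def eb_0)
  then show ?case by (cases e) (simp add: onehot_def)
next
  case (Suc i)
  obtain u v where e: "e = (u, v)" by (cases e)
  have "feat (gnn_dim N) (sim_params N \<sigma>) E (Suc i) (u, v) k = onehot (idx (Suc i) (eb E (Suc i) (u, v))) k"
    using Suc tracks colors unfolding e tracks_colors_def
    by (intro feat_sim_params_Suc_onehot[where ix = "idx i"]) (auto simp del: eb.simps)
  then show ?case by (simp add: e)
qed

lemma gnn_out_sim_params:
  fixes E :: "'a set set"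
  assumes "tracks_colors C N idx \<sigma>" and "\<And>i e. e \<in> oedges E \<Longrightarrow> eb E i e \<in> C i"
    and "k < gnn_dim N"
  shows "gnn_out (gnn_dim N) t (sim_params N \<sigma>) E k = real (count (image_mset (idx t) (eb_colors E t)) k)"
proof -
  have "gnn_out (gnn_dim N) t (sim_params N \<sigma>) E k = (\<Sum>e\<in>oedges E. onehot (idx t (eb E t e)) k)"
    unfolding gnn_out_def using feat_sim_params_onehot[OF assms(1,2) _ assms(3)] by (intro sum.cong) auto
  also have "\<dots> = real (count (image_mset (idx t) (eb_colors E t)) k)"
    by (simp add: sum_onehot_eq_count eb_colors_def multiset.map_comp comp_def)
  finally show ?thesis .
qed

lemma tracks_colors_exists:
  assumes fin: "\<And>l. finite (C l)" and card: "\<And>l. card (C l) \<le> N" and init: "C 0 \<subseteq> {Init}"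
    and over: "\<And>i col. col \<in> C (Suc i) \<Longrightarrow> color_over (C i) N col"
  shows "\<exists>idx \<sigma>. tracks_colors C N idx \<sigma>"
proof -
  define idx where "idx l = (SOME h. bij_betw h (C l) {0..<card (C l)})" for l
  have bij: "bij_betw (idx l) (C l) {0..<card (C l)}" for l
    unfolding idx_def using ex_bij_betw_finite_nat[OF fin] by (rule someI_ex)
  then have inj: "inj_on (idx l) (C l)" for l by (simp add: bij_betw_def)
  have idx_less: "idx l c < card (C l)" if "c \<in> C l" for l c
    using bij_betwE[OF bij[of l]] that by simp
  then have bound: "\<forall>c\<in>C l. idx l c < N" for l using card[of l] order_less_le_trans by blast
  have "card (C 0) \<le> 1" using card_mono[OF _ init] by simp
  then have init_idx: "\<forall>c\<in>C 0. idx 0 c = 0" using idx_less[of _ 0] by fastforce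
  have "\<exists>s. \<forall>col\<in>C (Suc i). \<forall>c. hat (real (code_num N (idx i) col) - s c) = onehot (idx (Suc i) col) c" for i
  proof (rule hat_thresholds_exist)
    show "inj_on (code_num N (idx i)) (C (Suc i))"
      using over by (intro inj_on_subset[OF code_num_inj_on[OF inj bound]]) auto
  qed (rule inj)
  then obtain \<sigma> where "\<forall>i. \<forall>col\<in>C (Suc i). \<forall>c. hat (real (code_num N (idx i) col) - \<sigma> i c) = onehot (idx (Suc i) col) c"
    by metis
  then show ?thesis using inj bound init_idx unfolding tracks_colors_def by blast
qed

lemma set_mset_eb_colors: "simple_graph E \<Longrightarrow> set_mset (eb_colors E l) = eb E l ` oedges E"
  by (simp add: eb_colors_def simple_graph_finite_oedges)

lemma tracks_colors_of_graphs_exists: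
  fixes G :: "'a set set" and H :: "'b set set"
  assumes "simple_graph G" and "simple_graph H"
  shows "\<exists>idx \<sigma>. tracks_colors (\<lambda>l. eb G l ` oedges G \<union> eb H l ` oedges H)
    (card (oedges G) + card (oedges H)) idx \<sigma>"
proof (rule tracks_colors_exists)
  fix l
  show "finite (eb G l ` oedges G \<union> eb H l ` oedges H)"
    using assms by (simp add: simple_graph_finite_oedges)
  have "card (eb G l ` oedges G \<union> eb H l ` oedges H) \<le> card (eb G l ` oedges G) + card (eb H l ` oedges H)"
    by (rule card_Un_le)
  also have "\<dots> \<le> card (oedges G) + card (oedges H)"
    using assms by (intro add_mono card_image_le) (simp_all add: simple_graph_finite_oedges)
  finally show "card (eb G l ` oedges G \<union> eb H l ` oedges H) \<le> card (oedges G) + card (oedges H)" .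
next
  show "eb G 0 ` oedges G \<union> eb H 0 ` oedges H \<subseteq> {Init}" by (auto simp: eb_0)
next
  fix i col
  assume "col \<in> eb G (Suc i) ` oedges G \<union> eb H (Suc i) ` oedges H"
  then show "color_over (eb G i ` oedges G \<union> eb H i ` oedges H) (card (oedges G) + card (oedges H)) col"
    using color_over_mono[OF color_over_eb[OF assms(1)]] color_over_mono[OF color_over_eb[OF assms(2)]]
    by (auto simp del: eb.simps)
qed

theorem mainTheorem9:
  fixes G :: "'a set set" and H :: "'b set set"
  assumes "simple_graph G" and "simple_graph H"
    and "eb_distinguishable G H"
  shows "\<exists>d t P. d \<ge> 1 \<and> t \<ge> 1 \<and> gnn_differs d t P G H"
proof -
  obtain L where "L \<ge> 1" and L: "eb_colors G L \<noteq> eb_colors H L"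
    using eb_distinguishable_imp_colors_differ[OF assms] by blast
  define N where "N = card (oedges G) + card (oedges H)"
  define C where "C = (\<lambda>l. eb G l ` oedges G \<union> eb H l ` oedges H)"
  obtain idx \<sigma> where tracks: "tracks_colors C N idx \<sigma>"
    using tracks_colors_of_graphs_exists[OF assms(1,2)] unfolding C_def N_def by blast
  have colors_G: "\<And>l e. e \<in> oedges G \<Longrightarrow> eb G l e \<in> C l"
    and colors_H: "\<And>l e. e \<in> oedges H \<Longrightarrow> eb H l e \<in> C l"
    by (simp_all add: C_def)
  obtain k where "k < N"
    and k: "count (image_mset (idx L) (eb_colors G L)) k \<noteq> count (image_mset (idx L) (eb_colors H L)) k"
    using multiset_eq_if_image_counts_below[of "idx L" "C L" "eb_colors G L" "eb_colors H L" N] L tracks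
      set_mset_eb_colors[OF assms(1)] set_mset_eb_colors[OF assms(2)]
    by (auto simp: tracks_colors_def C_def)
  then have "k < gnn_dim N" by (simp add: gnn_dim_def code_dim_def)
  then have "gnn_out (gnn_dim N) L (sim_params N \<sigma>) G k \<noteq> gnn_out (gnn_dim N) L (sim_params N \<sigma>) H k"
    using k gnn_out_sim_params[OF tracks colors_G] gnn_out_sim_params[OF tracks colors_H] by simp
  with \<open>k < gnn_dim N\<close> \<open>L \<ge> 1\<close> show ?thesis
    unfolding gnn_differs_def by (intro exI[of _ "gnn_dim N"] exI[of _ L] exI[of _ "sim_params N \<sigma>"]) auto
qed

end
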